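(* Let $q$ be a prime power, $m\ge 1$, and let $\mathcal{C}$ be an $[n,k]$ linear code over $\mathbb{F}_{q^m}$. The generalized subfield subcodes of $\mathcal{C}$ (over all choices of the basis $\mathcal{B}$, of $u\in\{1,\dots,m\}^n$, of $f\in GL_q(m)^n$ and of the block permutation $\pi$) are exactly the codes $\mathcal{C}P\cap\mathbb{F}_q^n$, where $P$ ranges over all $n\times n$ monomial matrices over $\mathbb{F}_{q^m}$ (i.e. exactly the subfield subcodes over $\mathbb{F}_q$ of the codes equivalent to $\mathcal{C}$ under $\mathbb{F}_{q^m}$-linear Hamming isometries).
   Context: A monomial matrix is a square matrix with exactly one nonzero entry in each row and each column; $\mathcal{C}P=\{cP: c\in\mathcal{C}\}$. For a basis $\mathcal{B}=(b_1,\dots,b_m)$ of $\mathbb{F}_{q^m}$ over $\mathbb{F}_q$, let $\phi_{\mathcal{B}}:\mathbb{F}_{q^m}\to\mathbb{F}_q^m$ send $\sum_i x_ib_i$ to $(x_1,\dots,x_m)$, and $\Phi_{\mathcal{B}}(c_1,\dots,c_n)=(\phi_{\mathcal{B}}(c_1)|\cdots|\phi_{\mathcal{B}}(c_n))\in(\mathbb{F}_q^m)^n=\mathbb{F}_q^{nm}$; the $q$-ary image is $Im_q(\mathcal{C})=\Phi_{\mathcal{B}}(\mathcal{C})$. $GL_q(m)$ is the group of $\mathbb{F}_q$-linear automorphisms of $\mathbb{F}_q^m$. For $f=(f_1,\dots,f_n)\in GL_q(m)^n$ and a permutation $\pi$ of $\{1,\dots,n\}$, $mon=\pi\circ f$ acts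 on $(x_1|\cdots|x_n)\in(\mathbb{F}_q^m)^n$ by replacing each block $x_i$ by $f_i(x_i)$ and then permuting the $n$ blocks according to $\pi$. For $u=(u_1,\dots,u_n)\in\{1,\dots,m\}^n$ and an $\mathbb{F}_q$-linear code $D\subseteq(\mathbb{F}_q^m)^n$, writing $x_{j,l}$ for the $l$-th coordinate of the $j$-th block of $x$, let $S_u(D)=\{(x_{1,u_1},\dots,x_{n,u_n}) : x\in D,\ x_{j,l}=0 \text{ for all } j \text{ and all } l\neq u_j\}\subseteq\mathbb{F}_q^n$ (shortening on all positions other than the $u_j$-th of each block). The generalized subfield subcode of $\mathcal{C}$ relative to $\mathcal{B},u,mon$ is $GSS(\mathcal{C})=S_u(mon(Im_q(\mathcal{C})))$. *)

theory Defs
  imports "HOL-Combinatorics.Permutations"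
begin

text \<open>Ambient field K = F_{q^m} is a finite field type 'a; F_q is a subfield F of it.
Vectors of length n are functions nat => 'a vanishing outside {0..<n}.
Coordinates/blocks are 0-based.\<close>

definition subfield :: "'a::field set \<Rightarrow> bool" where
  "subfield F \<longleftrightarrow> 0 \<in> F \<and> 1 \<in> F \<and> (\<forall>x\<in>F. \<forall>y\<in>F. x + y \<in> F \<and> x * y \<in> F)
     \<and> (\<forall>x\<in>F. - x \<in> F) \<and> (\<forall>x\<in>F. x \<noteq> 0 \<longrightarrow> inverse x \<in> F)"

definition vecs :: "nat \<Rightarrow> (nat \<Rightarrow> 'a::zero) set" where
  "vecs n = {x. \<forall>i\<ge>n. x i = 0}"

definition subvecs :: "'a::zero set \<Rightarrow> nat \<Rightarrow> (nat \<Rightarrow> 'a) set" where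
  "subvecs F n = {x \<in> vecs n. \<forall>i<n. x i \<in> F}"

definition linear_code :: "nat \<Rightarrow> (nat \<Rightarrow> 'a::field) set \<Rightarrow> bool" where
  "linear_code n C \<longleftrightarrow> C \<subseteq> vecs n \<and> (\<lambda>_. 0) \<in> C
     \<and> (\<forall>x\<in>C. \<forall>y\<in>C. (\<lambda>i. x i + y i) \<in> C) \<and> (\<forall>a. \<forall>x\<in>C. (\<lambda>i. a * x i) \<in> C)"

definition monomial_matrix :: "nat \<Rightarrow> (nat \<Rightarrow> nat \<Rightarrow> 'a::field) \<Rightarrow> bool" where
  "monomial_matrix n P \<longleftrightarrow> (\<forall>i j. (i \<ge> n \<or> j \<ge> n) \<longrightarrow> P i j = 0)
     \<and> (\<forall>i<n. \<exists>!j. j < n \<and> P i j \<noteq> 0) \<and> (\<forall>j<n. \<exists>!i. i < n \<and> P i j \<noteq> 0)"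

definition vec_mat :: "nat \<Rightarrow> (nat \<Rightarrow> 'a::field) \<Rightarrow> (nat \<Rightarrow> nat \<Rightarrow> 'a) \<Rightarrow> nat \<Rightarrow> 'a" where
  "vec_mat n c P = (\<lambda>j. \<Sum>i<n. c i * P i j)"

definition is_basis :: "'a::field set \<Rightarrow> nat \<Rightarrow> 'a list \<Rightarrow> bool" where
  "is_basis F m B \<longleftrightarrow> length B = m \<and>
     (\<forall>x. \<exists>!v. v \<in> subvecs F m \<and> x = (\<Sum>i<m. v i * B ! i))"

definition coords :: "'a::field set \<Rightarrow> nat \<Rightarrow> 'a list \<Rightarrow> 'a \<Rightarrow> nat \<Rightarrow> 'a" where
  "coords F m B x = (THE v. v \<in> subvecs F m \<and> x = (\<Sum>i<m. v i * B ! i))"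

text \<open>Phi_B: block j of the image is phi_B(c_j); elements of (F^m)^n are
  represented as functions nat => nat => 'a (block index, coordinate in block).\<close>
definition Phi :: "'a::field set \<Rightarrow> nat \<Rightarrow> nat \<Rightarrow> 'a list \<Rightarrow> (nat \<Rightarrow> 'a) \<Rightarrow> nat \<Rightarrow> nat \<Rightarrow> 'a" where
  "Phi F n m B c = (\<lambda>j. if j < n then coords F m B (c j) else (\<lambda>_. 0))"

definition q_image :: "'a::field set \<Rightarrow> nat \<Rightarrow> nat \<Rightarrow> 'a list \<Rightarrow> (nat \<Rightarrow> 'a) set \<Rightarrow> (nat \<Rightarrow> nat \<Rightarrow> 'a) set" where
  "q_image F n m B C = Phi F n m B ` C"

definition GLq :: "'a::field set \<Rightarrow> nat \<Rightarrow> ((nat \<Rightarrow> 'a) \<Rightarrow> (nat \<Rightarrow> 'a)) set" where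
  "GLq F m = {f. bij_betw f (subvecs F m) (subvecs F m)
     \<and> (\<forall>x\<in>subvecs F m. \<forall>y\<in>subvecs F m. f (\<lambda>i. x i + y i) = (\<lambda>i. f x i + f y i))
     \<and> (\<forall>a\<in>F. \<forall>x\<in>subvecs F m. f (\<lambda>i. a * x i) = (\<lambda>i. a * f x i))}"

text \<open>mon = pi o f: apply f_i to block i, then move block i to position pi i.\<close>
definition mon_map :: "nat \<Rightarrow> (nat \<Rightarrow> nat) \<Rightarrow> (nat \<Rightarrow> (nat \<Rightarrow> 'a) \<Rightarrow> (nat \<Rightarrow> 'a))
    \<Rightarrow> (nat \<Rightarrow> nat \<Rightarrow> 'a::zero) \<Rightarrow> nat \<Rightarrow> nat \<Rightarrow> 'a" where
  "mon_map n \<pi> f x = (\<lambda>j. if j < n then f (inv \<pi> j) (x (inv \<pi> j)) else (\<lambda>_. 0))"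

definition shorten :: "nat \<Rightarrow> nat \<Rightarrow> (nat \<Rightarrow> nat) \<Rightarrow> (nat \<Rightarrow> nat \<Rightarrow> 'a::zero) set \<Rightarrow> (nat \<Rightarrow> 'a) set" where
  "shorten n m u D = (\<lambda>x. \<lambda>j. if j < n then x j (u j) else 0) `
     {x \<in> D. \<forall>j<n. \<forall>l<m. l \<noteq> u j \<longrightarrow> x j l = 0}"

definition GSS :: "'a::field set \<Rightarrow> nat \<Rightarrow> nat \<Rightarrow> 'a list \<Rightarrow> (nat \<Rightarrow> nat)
    \<Rightarrow> (nat \<Rightarrow> (nat \<Rightarrow> 'a) \<Rightarrow> (nat \<Rightarrow> 'a)) \<Rightarrow> (nat \<Rightarrow> nat) \<Rightarrow> (nat \<Rightarrow> 'a) set \<Rightarrow> (nat \<Rightarrow> 'a) set" where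
  "GSS F n m B u f \<pi> C = shorten n m u (mon_map n \<pi> f ` q_image F n m B C)"

end

theory Submission
  imports Defs
begin

text \<open>Both families consist of the codes \<open>{a \<in> F\<^sup>n. (w\<^sub>i a\<^bsub>\<sigma> i\<^esub>)\<^sub>i \<in> C}\<close> for a permutation
  \<open>\<sigma>\<close> and nonzero weights \<open>w\<close>.  For \<open>C P \<inter> F\<^sup>n\<close> this is immediate, with \<open>\<sigma>\<close> and \<open>w\<^sub>i = p\<^sub>i\<^sup>-\<^sup>1\<close>
  read off the monomial matrix \<open>P\<close>.  For a generalized subfield subcode, let \<open>\<beta>\<^sub>i\<close> be the element
  that \<open>f\<^sub>i \<circ> \<phi>\<^sub>B\<close> sends to the unit vector at position \<open>u\<^bsub>\<pi> i\<^esub>\<close>.  Since \<open>f\<^sub>i \<circ> \<phi>\<^sub>B\<close> is \<open>F\<close>-linear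
  and injective, the \<open>i\<close>-th block survives the shortening exactly when \<open>c\<^sub>i\<close> is an \<open>F\<close>-multiple
  of \<open>\<beta>\<^sub>i\<close>, and the surviving coordinate is the multiplier; so the code is of the above shape
  with \<open>\<sigma> = \<pi>\<close>, \<open>w = \<beta>\<close>.  Conversely, any nonzero \<open>w\<^sub>i\<close> arises as \<open>\<beta>\<^sub>i\<close> for \<open>u = 0\<close> and the
  \<open>F\<close>-linear automorphism \<open>\<phi>\<^sub>B \<circ> (x \<mapsto> b\<^sub>1 w\<^sub>i\<^sup>-\<^sup>1 x) \<circ> \<phi>\<^sub>B\<^sup>-\<^sup>1\<close>.\<close>

lemma permutes_lessThan_iff: "\<pi> permutes {..<n} \<Longrightarrow> \<pi> i < n \<longleftrightarrow> i < n"
  using permutes_in_image by fastforce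

lemma permutes_lessThan_all: "\<pi> permutes {..<n} \<Longrightarrow> (\<forall>j<n. P j) \<longleftrightarrow> (\<forall>i<n. P (\<pi> i))"
  by (metis permutes_inverses(1) permutes_lessThan_iff)

lemma subvecs_add:
  "subfield F \<Longrightarrow> v \<in> subvecs F m \<Longrightarrow> w \<in> subvecs F m \<Longrightarrow> (\<lambda>i. v i + w i) \<in> subvecs F m"
  unfolding subvecs_def vecs_def subfield_def by auto

lemma subvecs_smult:
  "subfield F \<Longrightarrow> a \<in> F \<Longrightarrow> v \<in> subvecs F m \<Longrightarrow> (\<lambda>i. a * v i) \<in> subvecs F m"
  unfolding subvecs_def vecs_def subfield_def by auto

lemma subvecs_single:
  "subfield F \<Longrightarrow> a \<in> F \<Longrightarrow> (\<lambda>_. 0)(v := a) \<in> subvecs F m \<longleftrightarrow> v < m \<or> a = 0"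
  unfolding subvecs_def vecs_def subfield_def by auto

lemma subvecs_eq_single:
  assumes "w \<in> subvecs F m" and "\<forall>l<m. l \<noteq> v \<longrightarrow> w l = 0"
  shows "w = (\<lambda>_. 0)(v := w v)"
  using assms unfolding subvecs_def vecs_def by (auto simp: fun_eq_iff) (metis not_le)

lemma vecs_eqI:
  assumes "x \<in> vecs n" and "y \<in> vecs n" and "\<forall>j<n. x j = y j"
  shows "x = y"
proof
  fix j
  show "x j = y j"
    using assms unfolding vecs_def by (cases "j < n") auto
qed

definition basis_comb :: "nat \<Rightarrow> 'a list \<Rightarrow> (nat \<Rightarrow> 'a) \<Rightarrow> 'a::field" where
  "basis_comb m B v = (\<Sum>i<m. v i * B ! i)"

lemma basis_comb_add: "basis_comb m B (\<lambda>i. v i + w i) = basis_comb m B v + basis_comb m B w"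
  unfolding basis_comb_def by (simp add: distrib_right sum.distrib)

lemma basis_comb_smult: "basis_comb m B (\<lambda>i. a * v i) = a * basis_comb m B v"
  unfolding basis_comb_def by (simp add: sum_distrib_left mult.assoc)

lemma basis_comb_single: "v < m \<Longrightarrow> basis_comb m B ((\<lambda>_. 0)(v := 1)) = B ! v"
  unfolding basis_comb_def
  by (subst sum.cong[OF refl, of _ _ "\<lambda>i. if i = v then B ! i else 0"]) auto

locale subfield_basis =
  fixes F :: "'a::field set" and m :: nat and B :: "'a list"
  assumes subfield: "subfield F" and basis: "is_basis F m B"
begin

lemma basis_comb_ex1: "\<exists>!v. v \<in> subvecs F m \<and> x = basis_comb m B v"
  using basis unfolding is_basis_def basis_comb_def by blast

lemma coords_in_subvecs: "coords F m B x \<in> subvecs F m"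
  and basis_comb_coords: "basis_comb m B (coords F m B x) = x"
  using theI'[OF basis_comb_ex1[of x]] unfolding coords_def basis_comb_def by auto

lemma coords_basis_comb: "v \<in> subvecs F m \<Longrightarrow> coords F m B (basis_comb m B v) = v"
  using the1_equality[OF basis_comb_ex1] unfolding coords_def basis_comb_def by blast

lemma coords_inject: "coords F m B x = coords F m B y \<longleftrightarrow> x = y"
  by (metis basis_comb_coords)

lemma coords_add: "coords F m B (x + y) = (\<lambda>i. coords F m B x i + coords F m B y i)"
proof -
  have "x + y = basis_comb m B (\<lambda>i. coords F m B x i + coords F m B y i)"
    by (simp add: basis_comb_add basis_comb_coords)
  then show ?thesis
    using coords_basis_comb[OF subvecs_add[OF subfield coords_in_subvecs coords_in_subvecs]] by simp
qed

lemma coords_smult: "a \<in> F \<Longrightarrow> coords F m B (a * x) = (\<lambda>i. a * coords F m B x i)"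
proof -
  assume a: "a \<in> F"
  have "a * x = basis_comb m B (\<lambda>i. a * coords F m B x i)"
    by (simp add: basis_comb_smult basis_comb_coords)
  then show ?thesis
    using coords_basis_comb[OF subvecs_smult[OF subfield a coords_in_subvecs]] by simp
qed

lemma coords_zero: "coords F m B 0 = (\<lambda>_. 0)"
  using coords_smult[of 0 0] subfield unfolding subfield_def by simp

lemma coords_nth: "v < m \<Longrightarrow> coords F m B (B ! v) = (\<lambda>_. 0)(v := 1)"
  using coords_basis_comb[of "(\<lambda>_. 0)(v := 1)"] subvecs_single[OF subfield, of 1 v m]
    subfield basis_comb_single[of v m B] unfolding subfield_def by simp

lemma nth_basis_nonzero: "v < m \<Longrightarrow> B ! v \<noteq> 0"
  using coords_nth[of v] coords_zero by (metis fun_upd_same zero_neq_one)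

end

lemma GLq_bij: "f \<in> GLq F m \<Longrightarrow> bij_betw f (subvecs F m) (subvecs F m)"
  and GLq_smult: "f \<in> GLq F m \<Longrightarrow> a \<in> F \<Longrightarrow> x \<in> subvecs F m \<Longrightarrow>
    f (\<lambda>i. a * x i) = (\<lambda>i. a * f x i)"
  unfolding GLq_def by blast+

lemma GLq_zero: "subfield F \<Longrightarrow> f \<in> GLq F m \<Longrightarrow> f (\<lambda>_. 0) = (\<lambda>_. 0)"
  using GLq_smult[of f F m 0 "\<lambda>_. 0"] unfolding subfield_def subvecs_def vecs_def by simp

context subfield_basis
begin

lemma GLq_coords_preimage_single:
  assumes g: "g \<in> GLq F m" and v: "v < m"
  obtains b where "b \<noteq> 0" and "g (coords F m B b) = (\<lambda>_. 0)(v := 1)"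
proof -
  have "(\<lambda>_. 0)(v := 1) \<in> subvecs F m"
    using subvecs_single[OF subfield, of 1 v m] v subfield unfolding subfield_def by simp
  then obtain x where x: "x \<in> subvecs F m" and gx: "g x = (\<lambda>_. 0)(v := 1)"
    using bij_betw_imp_surj_on[OF GLq_bij[OF g]] by (metis imageE)
  have "basis_comb m B x \<noteq> 0"
    using gx GLq_zero[OF subfield g] coords_zero coords_basis_comb[OF x]
    by (metis fun_upd_same zero_neq_one)
  with that show thesis using gx coords_basis_comb[OF x] by metis
qed

lemma GLq_coords_smult_preimage:
  assumes g: "g \<in> GLq F m" and gb: "g (coords F m B b) = (\<lambda>_. 0)(v := 1)" and a: "a \<in> F"
  shows "g (coords F m B (a * b)) = (\<lambda>_. 0)(v := a)"
  using GLq_smult[OF g a coords_in_subvecs] gb by (simp add: coords_smult[OF a] fun_eq_iff)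

lemma GLq_coords_supported_single:
  assumes g: "g \<in> GLq F m" and gb: "g (coords F m B b) = (\<lambda>_. 0)(v := 1)"
    and supp: "\<forall>l<m. l \<noteq> v \<longrightarrow> g (coords F m B y) l = 0"
  shows "g (coords F m B y) v \<in> F" and "y = g (coords F m B y) v * b"
proof -
  let ?w = "g (coords F m B y)"
  have w: "?w \<in> subvecs F m"
    using bij_betw_apply[OF GLq_bij[OF g] coords_in_subvecs] .
  have "(\<lambda>_. 0)(v := 1) \<in> subvecs F m"
    using gb bij_betw_apply[OF GLq_bij[OF g] coords_in_subvecs[of b]] by simp
  then have v: "v < m"
    unfolding subvecs_def vecs_def by (auto simp: not_less[symmetric])
  then show aF: "?w v \<in> F" using w unfolding subvecs_def by auto
  have "?w = (\<lambda>_. 0)(v := ?w v)"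
    by (rule subvecs_eq_single[OF w supp])
  also have "\<dots> = g (coords F m B (?w v * b))"
    by (rule GLq_coords_smult_preimage[OF g gb aF, symmetric])
  finally show "y = ?w v * b"
    using inj_onD[OF bij_betw_imp_inj_on[OF GLq_bij[OF g]] _ coords_in_subvecs coords_in_subvecs]
    by (simp add: coords_inject)
qed

lemma mult_basis_comb_GLq:
  assumes "\<gamma> \<noteq> 0"
  shows "(\<lambda>v. coords F m B (\<gamma> * basis_comb m B v)) \<in> GLq F m"
proof -
  let ?f = "\<lambda>v. coords F m B (\<gamma> * basis_comb m B v)"
  have "inj_on ?f (subvecs F m)"
    using assms by (intro inj_onI) (metis coords_inject coords_basis_comb mult_left_cancel)
  moreover have "?f ` subvecs F m = subvecs F m"
  proof
    show "?f ` subvecs F m \<subseteq> subvecs F m"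
      using coords_in_subvecs by blast
    have "?f (coords F m B (inverse \<gamma> * basis_comb m B w)) = w" if "w \<in> subvecs F m" for w
      using assms that by (simp add: basis_comb_coords coords_basis_comb mult.assoc[symmetric])
    then show "subvecs F m \<subseteq> ?f ` subvecs F m"
      using coords_in_subvecs by (blast intro: image_eqI[OF sym])
  qed
  moreover have "?f (\<lambda>i. x i + y i) = (\<lambda>i. ?f x i + ?f y i)" for x y
    by (simp add: basis_comb_add distrib_left coords_add)
  moreover have "?f (\<lambda>i. a * x i) = (\<lambda>i. a * ?f x i)" if "a \<in> F" for a x
    using that by (simp only: basis_comb_smult mult.left_commute[of \<gamma> a] coords_smult)
  ultimately show ?thesis
    unfolding GLq_def bij_betw_def by blast
qed

end

definition monomial_subcode ::
    "'a::field set \<Rightarrow> nat \<Rightarrow> (nat \<Rightarrow> nat) \<Rightarrow> (nat \<Rightarrow> 'a) \<Rightarrow> (nat \<Rightarrow> 'a) set \<Rightarrow> (nat \<Rightarrow> 'a) set" where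
  "monomial_subcode F n \<sigma> w C = {a \<in> subvecs F n. \<exists>c\<in>C. \<forall>i<n. c i = w i * a (\<sigma> i)}"

lemma mon_map_Phi_apply:
  assumes "\<pi> permutes {..<n}" and "i < n"
  shows "mon_map n \<pi> f (Phi F n m B c) (\<pi> i) = f i (coords F m B (c i))"
  using assms by (simp add: mon_map_def Phi_def permutes_lessThan_iff permutes_inverses)

lemma mem_GSS_iff:
  "y \<in> GSS F n m B u f \<pi> C \<longleftrightarrow> (\<exists>c\<in>C.
      (\<forall>j<n. \<forall>l<m. l \<noteq> u j \<longrightarrow> mon_map n \<pi> f (Phi F n m B c) j l = 0)
      \<and> y = (\<lambda>j. if j < n then mon_map n \<pi> f (Phi F n m B c) j (u j) else 0))"
  unfolding GSS_def shorten_def q_image_def by blast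

context subfield_basis
begin

lemma GSS_subset_monomial_subcode:
  assumes \<pi>: "\<pi> permutes {..<n}" and f: "\<forall>i<n. f i \<in> GLq F m"
    and \<beta>: "\<forall>i<n. f i (coords F m B (\<beta> i)) = (\<lambda>_. 0)(u (\<pi> i) := 1)"
  shows "GSS F n m B u f \<pi> C \<subseteq> monomial_subcode F n \<pi> \<beta> C"
proof
  fix y assume "y \<in> GSS F n m B u f \<pi> C"
  then obtain c where "c \<in> C"
    and supp: "\<forall>j<n. \<forall>l<m. l \<noteq> u j \<longrightarrow> mon_map n \<pi> f (Phi F n m B c) j l = 0"
    and y: "y = (\<lambda>j. if j < n then mon_map n \<pi> f (Phi F n m B c) j (u j) else 0)"
    unfolding mem_GSS_iff by blast
  have "y (\<pi> i) \<in> F \<and> c i = \<beta> i * y (\<pi> i)" if i: "i < n" for i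
  proof -
    have "\<forall>l<m. l \<noteq> u (\<pi> i) \<longrightarrow> f i (coords F m B (c i)) l = 0"
      using supp mon_map_Phi_apply[OF \<pi> i, of f F m B c] permutes_lessThan_iff[OF \<pi>] i by metis
    then show ?thesis
      using GLq_coords_supported_single[of "f i" "\<beta> i" "u (\<pi> i)" "c i"] f \<beta> i
        mon_map_Phi_apply[OF \<pi> i, of f F m B c] y
      by (simp add: permutes_lessThan_iff[OF \<pi>] mult.commute)
  qed
  then have "y \<in> subvecs F n" and "\<forall>i<n. c i = \<beta> i * y (\<pi> i)"
    using permutes_lessThan_all[OF \<pi>, of "\<lambda>j. y j \<in> F"] y
    unfolding subvecs_def vecs_def by auto
  with \<open>c \<in> C\<close> show "y \<in> monomial_subcode F n \<pi> \<beta> C"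
    unfolding monomial_subcode_def by blast
qed

lemma monomial_subcode_subset_GSS:
  assumes \<pi>: "\<pi> permutes {..<n}" and f: "\<forall>i<n. f i \<in> GLq F m"
    and \<beta>: "\<forall>i<n. f i (coords F m B (\<beta> i)) = (\<lambda>_. 0)(u (\<pi> i) := 1)"
  shows "monomial_subcode F n \<pi> \<beta> C \<subseteq> GSS F n m B u f \<pi> C"
proof
  fix a assume "a \<in> monomial_subcode F n \<pi> \<beta> C"
  then obtain c where a: "a \<in> subvecs F n" and "c \<in> C" and c: "\<forall>i<n. c i = \<beta> i * a (\<pi> i)"
    unfolding monomial_subcode_def by blast
  let ?x = "mon_map n \<pi> f (Phi F n m B c)"
  have "?x (\<pi> i) = (\<lambda>_. 0)(u (\<pi> i) := a (\<pi> i))" if i: "i < n" for i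
  proof -
    have "a (\<pi> i) \<in> F"
      using a i permutes_lessThan_iff[OF \<pi>] unfolding subvecs_def by blast
    then show ?thesis
      using GLq_coords_smult_preimage[of "f i" "\<beta> i" "u (\<pi> i)" "a (\<pi> i)"] f \<beta> c i
        mon_map_Phi_apply[OF \<pi> i, of f F m B c]
      by (simp add: mult.commute)
  qed
  then have x: "\<forall>j<n. ?x j = (\<lambda>_. 0)(u j := a j)"
    using permutes_lessThan_all[OF \<pi>, of "\<lambda>j. ?x j = (\<lambda>_. 0)(u j := a j)"] by blast
  then have "\<forall>j<n. \<forall>l<m. l \<noteq> u j \<longrightarrow> ?x j l = 0"
    by simp
  moreover have "a = (\<lambda>j. if j < n then ?x j (u j) else 0)"
    using a x unfolding subvecs_def vecs_def by (simp add: fun_eq_iff)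
  ultimately show "a \<in> GSS F n m B u f \<pi> C"
    unfolding mem_GSS_iff using \<open>c \<in> C\<close> by blast
qed

lemma GSS_in_monomial_subcodes:
  assumes \<pi>: "\<pi> permutes {..<n}" and u: "\<forall>j<n. u j < m" and f: "\<forall>i<n. f i \<in> GLq F m"
  shows "GSS F n m B u f \<pi> C
    \<in> {monomial_subcode F n \<sigma> w C | \<sigma> w. \<sigma> permutes {..<n} \<and> (\<forall>i<n. w i \<noteq> 0)}"
proof -
  have "\<exists>b. b \<noteq> 0 \<and> f i (coords F m B b) = (\<lambda>_. 0)(u (\<pi> i) := 1)" if "i < n" for i
  proof -
    have "f i \<in> GLq F m" and "u (\<pi> i) < m"
      using f u permutes_lessThan_iff[OF \<pi>] that by auto
    then obtain b where "b \<noteq> 0" and "f i (coords F m B b) = (\<lambda>_. 0)(u (\<pi> i) := 1)"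
      by (rule GLq_coords_preimage_single)
    then show ?thesis
      by blast
  qed
  then obtain \<beta> where \<beta>_nonzero: "\<forall>i<n. \<beta> i \<noteq> 0"
    and \<beta>: "\<forall>i<n. f i (coords F m B (\<beta> i)) = (\<lambda>_. 0)(u (\<pi> i) := 1)"
    by metis
  have "GSS F n m B u f \<pi> C = monomial_subcode F n \<pi> \<beta> C"
    using GSS_subset_monomial_subcode[OF \<pi> f \<beta>] monomial_subcode_subset_GSS[OF \<pi> f \<beta>] by blast
  then show ?thesis
    using \<pi> \<beta>_nonzero by blast
qed

lemma monomial_subcode_eq_GSS:
  assumes m: "m \<ge> 1" and \<sigma>: "\<sigma> permutes {..<n}" and w: "\<forall>i<n. w i \<noteq> 0"
  defines "f \<equiv> \<lambda>i v. coords F m B (B ! 0 * inverse (w i) * basis_comb m B v)"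
  shows "\<forall>i<n. f i \<in> GLq F m" and "monomial_subcode F n \<sigma> w C = GSS F n m B (\<lambda>_. 0) f \<sigma> C"
proof -
  have "B ! 0 \<noteq> 0"
    using nth_basis_nonzero m by simp
  then show f: "\<forall>i<n. f i \<in> GLq F m"
    unfolding f_def using mult_basis_comb_GLq w by simp
  have "f i (coords F m B (w i)) = (\<lambda>_. 0)(0 := 1)" if "i < n" for i
  proof -
    have "f i (coords F m B (w i)) = coords F m B (B ! 0 * inverse (w i) * w i)"
      unfolding f_def by (simp only: basis_comb_coords)
    also have "\<dots> = coords F m B (B ! 0)"
      using w that by (simp add: mult.assoc)
    also have "\<dots> = (\<lambda>_. 0)(0 := 1)"
      using coords_nth m by simp
    finally show ?thesis .
  qed
  then have \<beta>: "\<forall>i<n. f i (coords F m B (w i)) = (\<lambda>_. 0)(0 := 1)"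
    by blast
  show "monomial_subcode F n \<sigma> w C = GSS F n m B (\<lambda>_. 0) f \<sigma> C"
    using GSS_subset_monomial_subcode[OF \<sigma> f, where u = "\<lambda>_. 0" and \<beta> = w]
      monomial_subcode_subset_GSS[OF \<sigma> f, where u = "\<lambda>_. 0" and \<beta> = w] \<beta> by auto
qed

end

definition scaled_perm_matrix :: "nat \<Rightarrow> (nat \<Rightarrow> nat) \<Rightarrow> (nat \<Rightarrow> 'a) \<Rightarrow> nat \<Rightarrow> nat \<Rightarrow> 'a::zero" where
  "scaled_perm_matrix n \<sigma> p = (\<lambda>i j. if i < n \<and> j = \<sigma> i then p i else 0)"

lemma monomial_matrix_scaled_perm_matrix:
  assumes \<sigma>: "\<sigma> permutes {..<n}" and p: "\<forall>i<n. p i \<noteq> 0"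
  shows "monomial_matrix n (scaled_perm_matrix n \<sigma> p)"
  unfolding monomial_matrix_def scaled_perm_matrix_def
proof (intro conjI allI impI)
  fix i j :: nat assume "n \<le> i \<or> n \<le> j"
  then show "(if i < n \<and> j = \<sigma> i then p i else 0) = 0"
    using permutes_lessThan_iff[OF \<sigma>, of i] by auto
next
  fix i assume "i < n"
  then show "\<exists>!j. j < n \<and> (if i < n \<and> j = \<sigma> i then p i else 0) \<noteq> 0"
    using p permutes_lessThan_iff[OF \<sigma>, of i]
    by (intro ex1I[of _ "\<sigma> i"]) (auto split: if_splits)
next
  fix j assume "j < n"
  then show "\<exists>!i. i < n \<and> (if i < n \<and> j = \<sigma> i then p i else 0) \<noteq> 0"
    using p permutes_lessThan_iff[OF permutes_inv[OF \<sigma>], of j]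
    by (intro ex1I[of _ "inv \<sigma> j"]) (auto simp: permutes_inverses[OF \<sigma>] split: if_splits)
qed

lemma monomial_matrix_eq_scaled_perm_matrix:
  assumes P: "monomial_matrix n P"
  obtains \<sigma> p where "\<sigma> permutes {..<n}" and "\<forall>i<n. p i \<noteq> 0" and "P = scaled_perm_matrix n \<sigma> p"
proof -
  have outside: "P i j = 0" if "n \<le> i \<or> n \<le> j" for i j
    using P that unfolding monomial_matrix_def by blast
  have row: "\<exists>!j. j < n \<and> P i j \<noteq> 0" if "i < n" for i
    using P that unfolding monomial_matrix_def by blast
  have col: "\<exists>!i. i < n \<and> P i j \<noteq> 0" if "j < n" for j
    using P that unfolding monomial_matrix_def by blast
  define \<sigma> where "\<sigma> i = (if i < n then THE j. j < n \<and> P i j \<noteq> 0 else i)" for i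
  have \<sigma>_row: "\<sigma> i < n \<and> P i (\<sigma> i) \<noteq> 0" if "i < n" for i
    using theI'[OF row[OF that]] that unfolding \<sigma>_def by simp
  have row_eq: "j = \<sigma> i" if "i < n" "j < n" "P i j \<noteq> 0" for i j
    using row[OF that(1)] \<sigma>_row[OF that(1)] that by blast
  have "inj_on \<sigma> {..<n}"
    by (intro inj_onI) (metis \<sigma>_row col lessThan_iff)
  moreover have "\<sigma> ` {..<n} \<subseteq> {..<n}"
    using \<sigma>_row by auto
  ultimately have "bij_betw \<sigma> {..<n} {..<n}"
    by (simp add: bij_betw_def endo_inj_surj)
  then have "\<sigma> permutes {..<n}"
    by (rule bij_imp_permutes) (simp add: \<sigma>_def)
  moreover have "\<forall>i<n. P i (\<sigma> i) \<noteq> 0"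
    using \<sigma>_row by blast
  moreover have "P = scaled_perm_matrix n \<sigma> (\<lambda>i. P i (\<sigma> i))"
  proof (intro ext)
    fix i j
    show "P i j = scaled_perm_matrix n \<sigma> (\<lambda>i. P i (\<sigma> i)) i j"
    proof (cases "i < n \<and> j < n")
      case True
      then show ?thesis
        using row_eq[of i j] unfolding scaled_perm_matrix_def by auto
    next
      case False
      then show ?thesis
        using outside[of i j] \<sigma>_row[of i] unfolding scaled_perm_matrix_def by auto
    qed
  qed
  ultimately show thesis
    by (rule that)
qed

lemma vec_mat_scaled_perm_matrix_apply:
  assumes "\<sigma> permutes {..<n}" and "i < n"
  shows "vec_mat n c (scaled_perm_matrix n \<sigma> p) (\<sigma> i) = c i * p i"
proof -
  have "vec_mat n c (scaled_perm_matrix n \<sigma> p) (\<sigma> i) = (\<Sum>k<n. if k = i then c k * p k else 0)"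
    unfolding vec_mat_def scaled_perm_matrix_def
    using permutes_inj[OF assms(1)] by (intro sum.cong) (auto dest: injD)
  then show ?thesis
    using assms(2) by simp
qed

lemma vec_mat_scaled_perm_matrix_vecs:
  assumes "\<sigma> permutes {..<n}"
  shows "vec_mat n c (scaled_perm_matrix n \<sigma> p) \<in> vecs n"
  unfolding vecs_def vec_mat_def scaled_perm_matrix_def
  by (auto intro!: sum.neutral dest: permutes_lessThan_iff[OF assms, THEN iffD2])

lemma vec_mat_scaled_perm_matrix_eq_monomial_subcode:
  assumes \<sigma>: "\<sigma> permutes {..<n}" and p: "\<forall>i<n. p i \<noteq> 0"
  shows "(\<lambda>c. vec_mat n c (scaled_perm_matrix n \<sigma> p)) ` C \<inter> subvecs F n
    = monomial_subcode F n \<sigma> (\<lambda>i. inverse (p i)) C"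
proof -
  have key: "vec_mat n c (scaled_perm_matrix n \<sigma> p) = a \<longleftrightarrow> (\<forall>i<n. c i = inverse (p i) * a (\<sigma> i))"
    if "a \<in> vecs n" for a c
  proof -
    have "vec_mat n c (scaled_perm_matrix n \<sigma> p) = a
        \<longleftrightarrow> (\<forall>j<n. vec_mat n c (scaled_perm_matrix n \<sigma> p) j = a j)"
      using vecs_eqI[OF vec_mat_scaled_perm_matrix_vecs[OF \<sigma>] that] by auto
    also have "\<dots> \<longleftrightarrow> (\<forall>i<n. c i * p i = a (\<sigma> i))"
      using permutes_lessThan_all[OF \<sigma>, of "\<lambda>j. vec_mat n c (scaled_perm_matrix n \<sigma> p) j = a j"]
      by (simp add: vec_mat_scaled_perm_matrix_apply[OF \<sigma>])
    finally show ?thesis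
      using p by (auto simp: field_simps)
  qed
  show ?thesis
  proof (intro set_eqI iffI)
    fix a assume "a \<in> (\<lambda>c. vec_mat n c (scaled_perm_matrix n \<sigma> p)) ` C \<inter> subvecs F n"
    then obtain c where "c \<in> C" "a \<in> subvecs F n" "vec_mat n c (scaled_perm_matrix n \<sigma> p) = a"
      by blast
    then show "a \<in> monomial_subcode F n \<sigma> (\<lambda>i. inverse (p i)) C"
      using key[of a c] unfolding monomial_subcode_def subvecs_def by blast
  next
    fix a assume "a \<in> monomial_subcode F n \<sigma> (\<lambda>i. inverse (p i)) C"
    then obtain c where "c \<in> C" "a \<in> subvecs F n" "\<forall>i<n. c i = inverse (p i) * a (\<sigma> i)"
      unfolding monomial_subcode_def by blast
    then show "a \<in> (\<lambda>c. vec_mat n c (scaled_perm_matrix n \<sigma> p)) ` C \<inter> subvecs F n"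
      using key[of a c] unfolding subvecs_def by blast
  qed
qed

lemma monomial_images_eq_monomial_subcodes:
  "{(\<lambda>c. vec_mat n c P) ` C \<inter> subvecs F n | P. monomial_matrix n P}
    = {monomial_subcode F n \<sigma> w C | \<sigma> w. \<sigma> permutes {..<n} \<and> (\<forall>i<n. w i \<noteq> 0)}"
proof (intro set_eqI iffI)
  fix X assume "X \<in> {(\<lambda>c. vec_mat n c P) ` C \<inter> subvecs F n | P. monomial_matrix n P}"
  then obtain P where X: "X = (\<lambda>c. vec_mat n c P) ` C \<inter> subvecs F n" and P: "monomial_matrix n P"
    by blast
  obtain \<sigma> p where \<sigma>: "\<sigma> permutes {..<n}" and p: "\<forall>i<n. p i \<noteq> 0"
    and "P = scaled_perm_matrix n \<sigma> p"
    using P by (rule monomial_matrix_eq_scaled_perm_matrix)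
  then have "X = monomial_subcode F n \<sigma> (\<lambda>i. inverse (p i)) C"
    using X vec_mat_scaled_perm_matrix_eq_monomial_subcode[OF \<sigma> p] by simp
  moreover have "\<forall>i<n. inverse (p i) \<noteq> 0"
    using p by simp
  ultimately show "X \<in> {monomial_subcode F n \<sigma> w C | \<sigma> w. \<sigma> permutes {..<n} \<and> (\<forall>i<n. w i \<noteq> 0)}"
    using \<sigma> by blast
next
  fix X assume "X \<in> {monomial_subcode F n \<sigma> w C | \<sigma> w. \<sigma> permutes {..<n} \<and> (\<forall>i<n. w i \<noteq> 0)}"
  then obtain \<sigma> w where X: "X = monomial_subcode F n \<sigma> w C"
    and \<sigma>: "\<sigma> permutes {..<n}" and w: "\<forall>i<n. w i \<noteq> 0"
    by blast
  let ?P = "scaled_perm_matrix n \<sigma> (\<lambda>i. inverse (w i))"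
  have inverse_w: "\<forall>i<n. inverse (w i) \<noteq> 0"
    using w by simp
  then have "X = (\<lambda>c. vec_mat n c ?P) ` C \<inter> subvecs F n"
    using vec_mat_scaled_perm_matrix_eq_monomial_subcode[OF \<sigma> inverse_w] X by simp
  moreover have "monomial_matrix n ?P"
    by (rule monomial_matrix_scaled_perm_matrix[OF \<sigma> inverse_w])
  ultimately show "X \<in> {(\<lambda>c. vec_mat n c P) ` C \<inter> subvecs F n | P. monomial_matrix n P}"
    by blast
qed

lemma GSS_family_eq_monomial_subcodes:
  assumes F: "subfield F" and m: "m \<ge> 1" and "\<exists>B. is_basis F m B"
  shows "{GSS F n m B u f \<pi> C | B u f \<pi>.
            is_basis F m B \<and> (\<forall>j<n. u j < m) \<and> (\<forall>j<n. f j \<in> GLq F m) \<and> \<pi> permutes {..<n}}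
    = {monomial_subcode F n \<sigma> w C | \<sigma> w. \<sigma> permutes {..<n} \<and> (\<forall>i<n. w i \<noteq> 0)}"
proof (intro set_eqI iffI)
  fix X assume "X \<in> {GSS F n m B u f \<pi> C | B u f \<pi>.
      is_basis F m B \<and> (\<forall>j<n. u j < m) \<and> (\<forall>j<n. f j \<in> GLq F m) \<and> \<pi> permutes {..<n}}"
  then obtain B u f \<pi> where X: "X = GSS F n m B u f \<pi> C" and B: "is_basis F m B"
    and "\<forall>j<n. u j < m" "\<forall>j<n. f j \<in> GLq F m" "\<pi> permutes {..<n}"
    by blast
  then show "X \<in> {monomial_subcode F n \<sigma> w C | \<sigma> w. \<sigma> permutes {..<n} \<and> (\<forall>i<n. w i \<noteq> 0)}"
    using subfield_basis.GSS_in_monomial_subcodes[OF subfield_basis.intro[OF F B]] by blast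
next
  fix X assume "X \<in> {monomial_subcode F n \<sigma> w C | \<sigma> w. \<sigma> permutes {..<n} \<and> (\<forall>i<n. w i \<noteq> 0)}"
  then obtain \<sigma> w where X: "X = monomial_subcode F n \<sigma> w C"
    and \<sigma>: "\<sigma> permutes {..<n}" and w: "\<forall>i<n. w i \<noteq> 0"
    by blast
  obtain B where B: "is_basis F m B"
    using assms(3) by blast
  have "\<forall>j<n. (\<lambda>_. 0) j < m"
    using m by simp
  then show "X \<in> {GSS F n m B u f \<pi> C | B u f \<pi>.
      is_basis F m B \<and> (\<forall>j<n. u j < m) \<and> (\<forall>j<n. f j \<in> GLq F m) \<and> \<pi> permutes {..<n}}"
    using subfield_basis.monomial_subcode_eq_GSS[OF subfield_basis.intro[OF F B] m \<sigma> w] X B \<sigma>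
    by blast
qed

theorem theorem4:
  fixes F :: "'a::{field, finite} set" and n m :: nat and C :: "(nat \<Rightarrow> 'a) set"
  assumes "subfield F"
    and "m \<ge> 1"
    and "\<exists>B. is_basis F m B"
    and "linear_code n C"
  shows "{GSS F n m B u f \<pi> C | B u f \<pi>.
            is_basis F m B \<and> (\<forall>j<n. u j < m) \<and> (\<forall>j<n. f j \<in> GLq F m)
            \<and> \<pi> permutes {..<n}}
       = {((\<lambda>c. vec_mat n c P) ` C) \<inter> subvecs F n | P. monomial_matrix n P}"
  unfolding GSS_family_eq_monomial_subcodes[OF assms(1-3)] monomial_images_eq_monomial_subcodes ..

end
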